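(* Consider a finite discounted MDP as described in the context, with discount factor $\alpha\in(0,1)$, terminal reward vector $v^0\in\mathbb{R}^m$, and accuracy $\epsilon>0$. Let $v^1(x):=\max_{a\in A(x)}r(x,a)$ for $x\in\mathbb{X}$, assume the coefficient $\gamma$ of the MDP satisfies $\gamma\in(0,1]$, and assume $sp(v^1)+sp(v^0)>0$. Then the value iteration algorithm (described in the context) finds a deterministic $\epsilon$-optimal policy after a finite number of iterations bounded above by $$F(\alpha):=\max\left\{\left\lceil\frac{\log\frac{(1-\alpha)\epsilon\gamma}{sp(v^1)+(1+\alpha)sp(v^0)}}{\log(\alpha\gamma)}\right\rceil,1\right\}.$$ Furthermore, for any fixed $\epsilon>0$, any fixed $\gamma\in(0,1]$ and any fixed $v^0,v^1\in\mathbb{R}^m$ with $sp(v^1)+sp(v^0)>0$, the function $F$ defined by this formula on $\alpha\in(0,1)$ satisfies: (a) $\lim_{\alpha\downarrow0}F(\alpha)=1$ and $\lim_{\alpha\uparrow1}F(\alpha)=+\infty$; (b) $F(\alpha)$ is non-decreasing in $\alpha$.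
   Context: A finite MDP has state space $\mathbb{X}=\{1,\dots,m\}$, nonempty finite action sets $A(x)$ for $x\in\mathbb{X}$, with $k=\sum_{x}|A(x)|$; one-step rewards $r(x,a)\in\mathbb{R}$ and transition probabilities $p(y|x,a)$ with $\sum_y p(y|x,a)=1$; and a terminal reward vector $v^0\in\mathbb{R}^m$. For a policy $\pi$ (possibly randomized and history-dependent) and initial state $x$, $v^\pi_\alpha(x)=\mathbb{E}^\pi_x\sum_{t=0}^\infty \alpha^t r(x_t,a_t)$ and $v_\alpha(x)=\sup_\pi v^\pi_\alpha(x)$. A policy $\pi$ is $\epsilon$-optimal if $v^\pi_\alpha(x)\ge v_\alpha(x)-\epsilon$ for all $x$. A deterministic policy is a map $\phi$ with $\phi(x)\in A(x)$. For $v\in\mathbb{R}^m$, $T^a_\alpha v(x)=r(x,a)+\alpha\sum_{y}p(y|x,a)v(y)$, $T^\phi_\alpha v(x)=T^{\phi(x)}_\alpha v(x)$, $T_\alpha v(x)=\max_{a\in A(x)}T^a_\alpha v(x)$. The span seminorm is $sp(u)=\max_x u(x)-\min_x u(x)$. The coefficient $\gamma$ of the MDP is $\gamma:=\max_{x,y\in\mathbb{X},\,a\in A(x),\,b\in A(y)}\big[1-\sum_{z}\min\{p(z|x,a),p(z|y,b)\}\big]$. Value iteration algorithm (given $\alpha\in(0,1)$, $\epsilon>0$): (1) set $u:=v^0$ and a number $\Delta>\frac{1-\alpha}{\alpha}\epsilon$; (2) while $\Delta>\frac{1-\alpha}{\alpha}\epsilon$: compute $v:=T_\alpha u$, set $\Delta:=sp(u-v)$,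 $u^*:=u$, $u:=v$ (each pass is one iteration); (3) output a deterministic policy $\phi$ with $v=T^\phi_\alpha u^*$. *)

theory Defs
  imports Complex_Main
begin

text \<open>Finite MDP: states are the elements of a finite type 's (so m = CARD('s));
  A x is the action set of state x; r x a the one-step reward;
  p x a y the transition probability from x to y under action a.\<close>

definition sp :: "('s::finite \<Rightarrow> real) \<Rightarrow> real" where
  "sp u = (MAX x. u x) - (MIN x. u x)"

definition Tact :: "('s \<Rightarrow> 'a \<Rightarrow> real) \<Rightarrow> ('s \<Rightarrow> 'a \<Rightarrow> 's::finite \<Rightarrow> real)
    \<Rightarrow> real \<Rightarrow> 'a \<Rightarrow> ('s \<Rightarrow> real) \<Rightarrow> 's \<Rightarrow> real" where
  "Tact r p \<alpha> a v x = r x a + \<alpha> * (\<Sum>y\<in>UNIV. p x a y * v y)"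

definition Tpol :: "('s \<Rightarrow> 'a \<Rightarrow> real) \<Rightarrow> ('s \<Rightarrow> 'a \<Rightarrow> 's::finite \<Rightarrow> real)
    \<Rightarrow> real \<Rightarrow> ('s \<Rightarrow> 'a) \<Rightarrow> ('s \<Rightarrow> real) \<Rightarrow> 's \<Rightarrow> real" where
  "Tpol r p \<alpha> \<phi> v x = Tact r p \<alpha> (\<phi> x) v x"

definition Topt :: "('s \<Rightarrow> 'a set) \<Rightarrow> ('s \<Rightarrow> 'a \<Rightarrow> real) \<Rightarrow> ('s \<Rightarrow> 'a \<Rightarrow> 's::finite \<Rightarrow> real)
    \<Rightarrow> real \<Rightarrow> ('s \<Rightarrow> real) \<Rightarrow> 's \<Rightarrow> real" where
  "Topt A r p \<alpha> v x = Max ((\<lambda>a. Tact r p \<alpha> a v x) ` A x)"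

definition coeff :: "('s \<Rightarrow> 'a set) \<Rightarrow> ('s \<Rightarrow> 'a \<Rightarrow> 's::finite \<Rightarrow> real) \<Rightarrow> real" where
  "coeff A p = Max {1 - (\<Sum>z\<in>UNIV. min (p x a z) (p y b z)) | x y a b. a \<in> A x \<and> b \<in> A y}"

text \<open>General (randomized, history-dependent) policies: pi h x a is the probability of
  choosing action a in current state x after history h (list of past state-action pairs).\<close>
definition valid_policy :: "('s \<Rightarrow> 'a set) \<Rightarrow> (('s \<times> 'a) list \<Rightarrow> 's \<Rightarrow> 'a \<Rightarrow> real) \<Rightarrow> bool" where
  "valid_policy A \<pi> = (\<forall>h x. (\<forall>a\<in>A x. 0 \<le> \<pi> h x a) \<and> (\<Sum>a\<in>A x. \<pi> h x a) = 1)"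

text \<open>exp_rew A r p pi h x t: expected reward t steps ahead, given history h and current state x.
  Thus exp_rew A r p pi [] x t = E^pi_x r(x_t, a_t).\<close>
fun exp_rew :: "('s \<Rightarrow> 'a set) \<Rightarrow> ('s \<Rightarrow> 'a \<Rightarrow> real) \<Rightarrow> ('s \<Rightarrow> 'a \<Rightarrow> 's::finite \<Rightarrow> real)
    \<Rightarrow> (('s \<times> 'a) list \<Rightarrow> 's \<Rightarrow> 'a \<Rightarrow> real) \<Rightarrow> ('s \<times> 'a) list \<Rightarrow> 's \<Rightarrow> nat \<Rightarrow> real" where
  "exp_rew A r p \<pi> h x 0 = (\<Sum>a\<in>A x. \<pi> h x a * r x a)"
| "exp_rew A r p \<pi> h x (Suc t) =
     (\<Sum>a\<in>A x. \<pi> h x a * (\<Sum>y\<in>UNIV. p x a y * exp_rew A r p \<pi> (h @ [(x, a)]) y t))"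

definition pol_value :: "('s \<Rightarrow> 'a set) \<Rightarrow> ('s \<Rightarrow> 'a \<Rightarrow> real) \<Rightarrow> ('s \<Rightarrow> 'a \<Rightarrow> 's::finite \<Rightarrow> real)
    \<Rightarrow> real \<Rightarrow> (('s \<times> 'a) list \<Rightarrow> 's \<Rightarrow> 'a \<Rightarrow> real) \<Rightarrow> 's \<Rightarrow> real" where
  "pol_value A r p \<alpha> \<pi> x = (\<Sum>t. \<alpha> ^ t * exp_rew A r p \<pi> [] x t)"

definition opt_value :: "('s \<Rightarrow> 'a set) \<Rightarrow> ('s \<Rightarrow> 'a \<Rightarrow> real) \<Rightarrow> ('s \<Rightarrow> 'a \<Rightarrow> 's::finite \<Rightarrow> real)
    \<Rightarrow> real \<Rightarrow> 's \<Rightarrow> real" where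
  "opt_value A r p \<alpha> x = (SUP \<pi>\<in>{\<pi>. valid_policy A \<pi>}. pol_value A r p \<alpha> \<pi> x)"

definition eps_optimal :: "('s \<Rightarrow> 'a set) \<Rightarrow> ('s \<Rightarrow> 'a \<Rightarrow> real) \<Rightarrow> ('s \<Rightarrow> 'a \<Rightarrow> 's::finite \<Rightarrow> real)
    \<Rightarrow> real \<Rightarrow> real \<Rightarrow> (('s \<times> 'a) list \<Rightarrow> 's \<Rightarrow> 'a \<Rightarrow> real) \<Rightarrow> bool" where
  "eps_optimal A r p \<alpha> \<epsilon> \<pi> = (\<forall>x. pol_value A r p \<alpha> \<pi> x \<ge> opt_value A r p \<alpha> x - \<epsilon>)"

definition det_policy :: "('s \<Rightarrow> 'a) \<Rightarrow> ('s \<times> 'a) list \<Rightarrow> 's \<Rightarrow> 'a \<Rightarrow> real" where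
  "det_policy \<phi> h x a = (if a = \<phi> x then 1 else 0)"

text \<open>Iteration n (n >= 1) computes
  v = T u with u = T^(n-1) v0 and Delta = sp(u - v); the loop stops after the first
  iteration n with Delta <= (1-alpha)/alpha * eps.\<close>
definition VI_iter :: "('s \<Rightarrow> 'a set) \<Rightarrow> ('s \<Rightarrow> 'a \<Rightarrow> real) \<Rightarrow> ('s \<Rightarrow> 'a \<Rightarrow> 's::finite \<Rightarrow> real)
    \<Rightarrow> real \<Rightarrow> ('s \<Rightarrow> real) \<Rightarrow> nat \<Rightarrow> 's \<Rightarrow> real" where
  "VI_iter A r p \<alpha> v0 n = (Topt A r p \<alpha> ^^ n) v0"

definition VI_stop :: "('s \<Rightarrow> 'a set) \<Rightarrow> ('s \<Rightarrow> 'a \<Rightarrow> real) \<Rightarrow> ('s \<Rightarrow> 'a \<Rightarrow> 's::finite \<Rightarrow> real)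
    \<Rightarrow> real \<Rightarrow> real \<Rightarrow> ('s \<Rightarrow> real) \<Rightarrow> nat \<Rightarrow> bool" where
  "VI_stop A r p \<alpha> \<epsilon> v0 n = (1 \<le> n \<and>
     sp (\<lambda>x. VI_iter A r p \<alpha> v0 (n - 1) x - VI_iter A r p \<alpha> v0 n x) \<le> (1 - \<alpha>) / \<alpha> * \<epsilon>)"

text \<open>The bound F(alpha); s1 = sp(v1), s0 = sp(v0).\<close>
definition VI_bound :: "real \<Rightarrow> real \<Rightarrow> real \<Rightarrow> real \<Rightarrow> real \<Rightarrow> real" where
  "VI_bound \<epsilon> \<gamma> s1 s0 \<alpha> =
     max (real_of_int \<lceil>ln ((1 - \<alpha>) * \<epsilon> * \<gamma> / (s1 + (1 + \<alpha>) * s0)) / ln (\<alpha> * \<gamma>)\<rceil>) 1"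

end

theory Submission
  imports Defs
begin

(* The Bellman operator T is a contraction for the span seminorm with modulus \<alpha>\<gamma>: for two
   state-action pairs the difference of the expected continuation values is at most their
   total-variation distance 1 - \<Sum> min(p, p') times the span. Hence the quantity
   \<Delta>_n = sp(T^(n-1) v0 - T^n v0) tested by value iteration is at most
   (\<alpha>\<gamma>)^(n-1) sp(v0 - T v0) <= (\<alpha>\<gamma>)^(n-1) (sp v1 + (1 + \<alpha>) sp v0), which is below
   (1 - \<alpha>) \<epsilon> / \<alpha> as soon as n >= F(\<alpha>).
   When the test succeeds with u the previous iterate and v = T u = T^\<phi> u, every policy is
   worth at most v - \<alpha> min(u - v) / (1 - \<alpha>) and \<phi> is worth at least
   v - \<alpha> max(u - v) / (1 - \<alpha>); these differ by \<alpha> sp(u - v) / (1 - \<alpha>) <= \<epsilon>.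
   The properties of F follow from the monotonicity in \<alpha> of both logarithms in its ratio. *)

section \<open>The span seminorm\<close>

lemma diff_le_sp: "f x - f y \<le> sp (f :: 's::finite \<Rightarrow> real)"
  unfolding sp_def by (intro diff_mono Max_ge Min_le) auto

lemma sp_leI:
  assumes "\<And>x y. f x - f y \<le> c"
  shows "sp (f :: 's::finite \<Rightarrow> real) \<le> c"
proof -
  have "(MAX x. f x) \<in> range f" "(MIN x. f x) \<in> range f"
    by (intro Max_in Min_in; simp)+
  then obtain x y where "(MAX x. f x) = f x" "(MIN x. f x) = f y"
    by (metis imageE)
  then show ?thesis
    unfolding sp_def using assms[of x y] by simp
qed

lemma sp_nonneg: "0 \<le> sp (f :: 's::finite \<Rightarrow> real)"
  using diff_le_sp[of f x x for x] by simp

lemma le_Max_range: "f x \<le> (MAX x. (f :: 's::finite \<Rightarrow> real) x)"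
  by (intro Max_ge) auto

lemma Min_range_le: "(MIN x. (f :: 's::finite \<Rightarrow> real) x) \<le> f x"
  by (intro Min_le) auto

lemma sum_prob_diff_mult_le:
  fixes q1 q2 d :: "'s::finite \<Rightarrow> real"
  assumes "\<And>z. 0 \<le> q1 z" "\<And>z. 0 \<le> q2 z" "sum q1 UNIV = 1" "sum q2 UNIV = 1"
    and "\<And>z. lo \<le> d z" "\<And>z. d z \<le> hi"
  shows "(\<Sum>z\<in>UNIV. (q1 z - q2 z) * d z) \<le> (1 - (\<Sum>z\<in>UNIV. min (q1 z) (q2 z))) * (hi - lo)"
proof -
  let ?m = "\<lambda>z. min (q1 z) (q2 z)"
  have "(\<Sum>z\<in>UNIV. (q1 z - q2 z) * d z)
      = (\<Sum>z\<in>UNIV. (q1 z - ?m z) * d z) - (\<Sum>z\<in>UNIV. (q2 z - ?m z) * d z)"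
    by (simp add: sum_subtractf[symmetric] algebra_simps)
  also have "\<dots> \<le> (\<Sum>z\<in>UNIV. (q1 z - ?m z) * hi) - (\<Sum>z\<in>UNIV. (q2 z - ?m z) * lo)"
    using assms by (intro diff_mono sum_mono mult_left_mono) auto
  also have "\<dots> = (1 - (\<Sum>z\<in>UNIV. ?m z)) * hi - (1 - (\<Sum>z\<in>UNIV. ?m z)) * lo"
    using assms(3,4) by (simp only: sum_distrib_right[symmetric] sum_subtractf)
  also have "\<dots> = (1 - (\<Sum>z\<in>UNIV. ?m z)) * (hi - lo)"
    by (simp add: algebra_simps)
  finally show ?thesis .
qed

section \<open>Monotone discounting operators\<close>

(* Blackwell's monotonicity and discounting conditions in a single inequality. *)
definition shift_monotone :: "real \<Rightarrow> (('s \<Rightarrow> real) \<Rightarrow> 's \<Rightarrow> real) \<Rightarrow> bool" where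
  "shift_monotone \<beta> S \<longleftrightarrow> (\<forall>w w' c. (\<forall>y. w y \<le> w' y + c) \<longrightarrow> (\<forall>x. S w x \<le> S w' x + \<beta> * c))"

lemma shift_monotoneI:
  "(\<And>w w' c x. (\<And>y. w y \<le> w' y + c) \<Longrightarrow> S w x \<le> S w' x + \<beta> * c) \<Longrightarrow> shift_monotone \<beta> S"
  unfolding shift_monotone_def by blast

lemma shift_monotoneD:
  "shift_monotone \<beta> S \<Longrightarrow> (\<And>y. w y \<le> w' y + c) \<Longrightarrow> S w x \<le> S w' x + \<beta> * c"
  unfolding shift_monotone_def by blast

lemma shift_monotone_funpow:
  fixes S :: "('s \<Rightarrow> real) \<Rightarrow> 's \<Rightarrow> real"
  assumes "shift_monotone \<beta> S"
  shows "shift_monotone (\<beta> ^ n) (S ^^ n)"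
proof (induction n)
  case 0
  show ?case by (rule shift_monotoneI) simp
next
  case (Suc n)
  show ?case
  proof (rule shift_monotoneI)
    fix w w' :: "'s \<Rightarrow> real" and c x
    assume "\<And>y. w y \<le> w' y + c"
    then have "\<And>y. (S ^^ n) w y \<le> (S ^^ n) w' y + \<beta> ^ n * c"
      by (rule shift_monotoneD[OF Suc.IH])
    then have "S ((S ^^ n) w) x \<le> S ((S ^^ n) w') x + \<beta> * (\<beta> ^ n * c)"
      by (rule shift_monotoneD[OF assms])
    then show "(S ^^ Suc n) w x \<le> (S ^^ Suc n) w' x + \<beta> ^ Suc n * c"
      by (simp add: mult.assoc)
  qed
qed

lemma geometric_sum_Suc: "(\<Sum>k<Suc n. \<beta> ^ k) = 1 + \<beta> * (\<Sum>k<n. (\<beta> :: real) ^ k)"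
  unfolding sum.lessThan_Suc_shift by (simp add: sum_distrib_left)

lemma funpow_le_geometric:
  assumes S: "shift_monotone \<beta> S" and step: "\<And>y. S v y \<le> v y + c"
  shows "(S ^^ n) v x \<le> v x + c * (\<Sum>k<n. \<beta> ^ k)"
proof (induction n arbitrary: x)
  case 0
  show ?case by simp
next
  case (Suc n)
  have "S ((S ^^ n) v) x \<le> S v x + \<beta> * (c * (\<Sum>k<n. \<beta> ^ k))"
    by (rule shift_monotoneD[OF S]) (use Suc.IH in auto)
  then show ?case
    using step[of x] geometric_sum_Suc[of \<beta> n] by (simp add: algebra_simps)
qed

lemma funpow_ge_geometric:
  assumes S: "shift_monotone \<beta> S" and step: "\<And>y. v y + c \<le> S v y"
  shows "v x + c * (\<Sum>k<n. \<beta> ^ k) \<le> (S ^^ n) v x"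
proof (induction n arbitrary: x)
  case 0
  show ?case by simp
next
  case (Suc n)
  have "S v x \<le> S ((S ^^ n) v) x + \<beta> * - (c * (\<Sum>k<n. \<beta> ^ k))"
    by (rule shift_monotoneD[OF S]) (use Suc.IH in \<open>simp add: algebra_simps\<close>)
  then show ?case
    using step[of x] geometric_sum_Suc[of \<beta> n] by (simp add: algebra_simps)
qed

locale discounted_mdp =
  fixes A :: "'s::finite \<Rightarrow> 'a set" and r :: "'s \<Rightarrow> 'a \<Rightarrow> real"
    and p :: "'s \<Rightarrow> 'a \<Rightarrow> 's \<Rightarrow> real" and \<alpha> :: real
  assumes A_fin: "\<And>x. finite (A x)" and A_ne: "\<And>x. A x \<noteq> {}"
    and p_nonneg: "\<And>x a y. a \<in> A x \<Longrightarrow> 0 \<le> p x a y"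
    and p_sum: "\<And>x a. a \<in> A x \<Longrightarrow> (\<Sum>y\<in>UNIV. p x a y) = 1"
    and alpha_pos: "0 < \<alpha>" and alpha_less_1: "\<alpha> < 1"
begin

abbreviation T :: "('s \<Rightarrow> real) \<Rightarrow> 's \<Rightarrow> real" where
  "T \<equiv> Topt A r p \<alpha>"

lemma Tact_le_Topt: "a \<in> A x \<Longrightarrow> Tact r p \<alpha> a w x \<le> T w x"
  unfolding Topt_def using A_fin by (intro Max_ge) auto

lemma Topt_attained:
  obtains a where "a \<in> A x" "T w x = Tact r p \<alpha> a w x"
proof -
  have "T w x \<in> (\<lambda>a. Tact r p \<alpha> a w x) ` A x"
    unfolding Topt_def using A_fin A_ne by (intro Max_in) auto
  then show ?thesis using that by blast
qed

lemma expectation_le_const_add: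
  assumes "a \<in> A x" "\<And>y. w y \<le> w' y + c"
  shows "(\<Sum>y\<in>UNIV. p x a y * w y) \<le> (\<Sum>y\<in>UNIV. p x a y * w' y) + c"
proof -
  have "(\<Sum>y\<in>UNIV. p x a y * w y) \<le> (\<Sum>y\<in>UNIV. p x a y * (w' y + c))"
    using assms p_nonneg by (intro sum_mono mult_left_mono) auto
  also have "\<dots> = (\<Sum>y\<in>UNIV. p x a y * w' y) + c"
    using p_sum[OF assms(1)] by (simp add: distrib_left sum.distrib sum_distrib_right[symmetric])
  finally show ?thesis .
qed

lemma expectation_le_Max: "a \<in> A x \<Longrightarrow> (\<Sum>y\<in>UNIV. p x a y * w y) \<le> (MAX y. w y)"
  using expectation_le_const_add[of a x w "\<lambda>_. 0" "MAX y. w y"] le_Max_range[of w] by simp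

lemma Min_le_expectation:
  assumes "a \<in> A x"
  shows "(MIN y. w y) \<le> (\<Sum>y\<in>UNIV. p x a y * w y)"
proof -
  have "0 \<le> w y + - (MIN y. w y)" for y
    using Min_range_le[of w y] by linarith
  then have "(\<Sum>y\<in>UNIV. p x a y * 0) \<le> (\<Sum>y\<in>UNIV. p x a y * w y) + - (MIN y. w y)"
    by (rule expectation_le_const_add[OF assms])
  then show ?thesis
    by (simp only: mult_zero_right sum.neutral_const)
qed

lemma Tact_shift:
  assumes "a \<in> A x" "\<And>y. w y \<le> w' y + c"
  shows "Tact r p \<alpha> a w x \<le> Tact r p \<alpha> a w' x + \<alpha> * c"
  using mult_left_mono[OF expectation_le_const_add[OF assms], of \<alpha>] alpha_pos
  unfolding Tact_def by (simp add: algebra_simps)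

lemma shift_monotone_Topt: "shift_monotone \<alpha> T"
proof (rule shift_monotoneI)
  fix w w' :: "'s \<Rightarrow> real" and c x
  assume le: "\<And>y. w y \<le> w' y + c"
  obtain a where a: "a \<in> A x" "T w x = Tact r p \<alpha> a w x" by (rule Topt_attained)
  have "Tact r p \<alpha> a w x \<le> Tact r p \<alpha> a w' x + \<alpha> * c"
    by (rule Tact_shift[OF a(1) le])
  then show "T w x \<le> T w' x + \<alpha> * c"
    using a Tact_le_Topt[OF a(1), of w'] by linarith
qed

lemma shift_monotone_Tpol: "(\<And>x. \<phi> x \<in> A x) \<Longrightarrow> shift_monotone \<alpha> (Tpol r p \<alpha> \<phi>)"
  unfolding Tpol_def by (intro shift_monotoneI Tact_shift) auto

section \<open>Values of policies\<close>

definition partial_value :: "(('s \<times> 'a) list \<Rightarrow> 's \<Rightarrow> 'a \<Rightarrow> real) \<Rightarrow> ('s \<times> 'a) list \<Rightarrow> 's \<Rightarrow> nat \<Rightarrow> real"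
  where "partial_value \<pi> h x n = (\<Sum>t<n. \<alpha> ^ t * exp_rew A r p \<pi> h x t)"

lemma partial_value_Suc:
  "partial_value \<pi> h x (Suc n) = (\<Sum>a\<in>A x. \<pi> h x a *
     (r x a + \<alpha> * (\<Sum>y\<in>UNIV. p x a y * partial_value \<pi> (h @ [(x, a)]) y n)))"
proof -
  have "(\<Sum>t<n. \<alpha> ^ Suc t * exp_rew A r p \<pi> h x (Suc t)) =
      (\<Sum>a\<in>A x. \<pi> h x a * (\<alpha> * (\<Sum>y\<in>UNIV. p x a y * partial_value \<pi> (h @ [(x, a)]) y n)))"
    unfolding partial_value_def exp_rew.simps
    by (simp add: sum_distrib_left sum_distrib_right mult_ac sum.swap[of _ "{..<n}"])
  then show ?thesis
    unfolding partial_value_def sum.lessThan_Suc_shift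
    by (simp add: distrib_left sum.distrib sum_distrib_left mult_ac)
qed

lemma partial_value_le_Topt_funpow:
  assumes \<pi>: "valid_policy A \<pi>"
  shows "partial_value \<pi> h x n \<le> (T ^^ n) (\<lambda>_. 0) x"
proof (induction n arbitrary: h x)
  case 0
  show ?case by (simp add: partial_value_def)
next
  case (Suc n)
  have "partial_value \<pi> h x (Suc n) \<le> (\<Sum>a\<in>A x. \<pi> h x a * T ((T ^^ n) (\<lambda>_. 0)) x)"
    unfolding partial_value_Suc
  proof (rule sum_mono)
    fix a assume a: "a \<in> A x"
    have "r x a + \<alpha> * (\<Sum>y\<in>UNIV. p x a y * partial_value \<pi> (h @ [(x, a)]) y n)
        \<le> Tact r p \<alpha> a ((T ^^ n) (\<lambda>_. 0)) x"
      unfolding Tact_def using alpha_pos p_nonneg[OF a] Suc.IH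
      by (intro add_left_mono mult_left_mono sum_mono) auto
    also have "\<dots> \<le> T ((T ^^ n) (\<lambda>_. 0)) x"
      by (rule Tact_le_Topt[OF a])
    finally show "\<pi> h x a * (r x a + \<alpha> * (\<Sum>y\<in>UNIV. p x a y * partial_value \<pi> (h @ [(x, a)]) y n))
        \<le> \<pi> h x a * T ((T ^^ n) (\<lambda>_. 0)) x"
      using \<pi> a unfolding valid_policy_def by (simp add: mult_left_mono)
  qed
  also have "\<dots> = T ((T ^^ n) (\<lambda>_. 0)) x"
    using \<pi> unfolding valid_policy_def by (simp add: sum_distrib_right[symmetric])
  finally show ?case by simp
qed

lemma valid_det_policy: "(\<And>x. \<phi> x \<in> A x) \<Longrightarrow> valid_policy A (det_policy \<phi>)"
  unfolding valid_policy_def det_policy_def using A_fin by (simp add: sum.delta')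

lemma partial_value_det_policy:
  assumes \<phi>: "\<And>x. \<phi> x \<in> A x"
  shows "partial_value (det_policy \<phi>) h x n = (Tpol r p \<alpha> \<phi> ^^ n) (\<lambda>_. 0) x"
proof (induction n arbitrary: h x)
  case 0
  show ?case by (simp add: partial_value_def)
next
  case (Suc n)
  have "partial_value (det_policy \<phi>) h x (Suc n) = r x (\<phi> x) +
      \<alpha> * (\<Sum>y\<in>UNIV. p x (\<phi> x) y * partial_value (det_policy \<phi>) (h @ [(x, \<phi> x)]) y n)"
    unfolding partial_value_Suc det_policy_def using \<phi> A_fin[of x]
    by (simp add: if_distrib[of "\<lambda>c. c * _"] sum.delta' cong: if_cong)
  then show ?case
    using Suc.IH by (simp add: Tpol_def Tact_def)
qed

lemma exp_rew_abs_le: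
  assumes \<pi>: "valid_policy A \<pi>" and R: "\<And>x a. a \<in> A x \<Longrightarrow> \<bar>r x a\<bar> \<le> R"
  shows "\<bar>exp_rew A r p \<pi> h x t\<bar> \<le> R"
proof (induction t arbitrary: h x)
  case 0
  have "\<bar>exp_rew A r p \<pi> h x 0\<bar> \<le> (\<Sum>a\<in>A x. \<pi> h x a * R)"
    unfolding exp_rew.simps using \<pi> R unfolding valid_policy_def
    by (intro order_trans[OF sum_abs] sum_mono) (simp add: abs_mult mult_left_mono)
  also have "\<dots> = R"
    using \<pi> unfolding valid_policy_def by (simp add: sum_distrib_right[symmetric])
  finally show ?case .
next
  case (Suc t)
  have "\<bar>exp_rew A r p \<pi> h x (Suc t)\<bar> \<le> (\<Sum>a\<in>A x. \<pi> h x a * R)"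
    unfolding exp_rew.simps
  proof (intro order_trans[OF sum_abs] sum_mono)
    fix a assume a: "a \<in> A x"
    have "\<bar>\<Sum>y\<in>UNIV. p x a y * exp_rew A r p \<pi> (h @ [(x, a)]) y t\<bar> \<le> (\<Sum>y\<in>UNIV. p x a y * R)"
      using p_nonneg[OF a] Suc.IH
      by (intro order_trans[OF sum_abs] sum_mono) (simp add: abs_mult mult_left_mono)
    also have "\<dots> = R"
      using p_sum[OF a] by (simp add: sum_distrib_right[symmetric])
    finally show "\<bar>\<pi> h x a * (\<Sum>y\<in>UNIV. p x a y * exp_rew A r p \<pi> (h @ [(x, a)]) y t)\<bar>
        \<le> \<pi> h x a * R"
      using \<pi> a unfolding valid_policy_def by (simp add: abs_mult mult_left_mono)
  qed
  also have "\<dots> = R"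
    using \<pi> unfolding valid_policy_def by (simp add: sum_distrib_right[symmetric])
  finally show ?case .
qed

lemma partial_value_tendsto:
  assumes \<pi>: "valid_policy A \<pi>"
  shows "(\<lambda>n. partial_value \<pi> [] x n) \<longlonglongrightarrow> pol_value A r p \<alpha> \<pi> x"
proof -
  define R where "R = (\<Sum>x\<in>UNIV. \<Sum>a\<in>A x. \<bar>r x a\<bar>)"
  have R: "\<bar>r x a\<bar> \<le> R" if "a \<in> A x" for x a
  proof -
    have "\<bar>r x a\<bar> \<le> (\<Sum>a\<in>A x. \<bar>r x a\<bar>)"
      using A_fin that by (intro member_le_sum) auto
    also have "\<dots> \<le> R"
      unfolding R_def by (intro member_le_sum[where f = "\<lambda>x. \<Sum>a\<in>A x. \<bar>r x a\<bar>"] sum_nonneg) auto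
    finally show ?thesis .
  qed
  have "summable (\<lambda>t. R * \<alpha> ^ t)"
    using alpha_pos alpha_less_1 by (intro summable_mult summable_geometric) simp
  then have "summable (\<lambda>t. \<alpha> ^ t * exp_rew A r p \<pi> [] x t)"
    by (rule summable_comparison_test[rotated])
      (use exp_rew_abs_le[OF \<pi> R] alpha_pos in \<open>auto simp: abs_mult mult.commute mult_left_mono\<close>)
  then show ?thesis
    unfolding partial_value_def pol_value_def by (rule summable_LIMSEQ)
qed

lemma geometric_tail_tendsto:
  "(\<lambda>n. v + c * (\<Sum>k<n. \<alpha> ^ k) + \<alpha> ^ n * C) \<longlonglongrightarrow> v + c / (1 - \<alpha>)"
proof -
  have "(\<lambda>n. \<Sum>k<n. \<alpha> ^ k) \<longlonglongrightarrow> 1 / (1 - \<alpha>)"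
    using geometric_sums[of \<alpha>] alpha_pos alpha_less_1 unfolding sums_def by simp
  moreover have "(\<lambda>n. \<alpha> ^ n) \<longlonglongrightarrow> 0"
    using alpha_pos alpha_less_1 by (intro LIMSEQ_power_zero) simp
  ultimately show ?thesis
    using tendsto_add[OF tendsto_add[OF tendsto_const tendsto_mult_left] tendsto_mult_right]
    by fastforce
qed

lemma pol_value_le_if_Topt_le:
  assumes \<pi>: "valid_policy A \<pi>" and step: "\<And>y. T v y \<le> v y + c"
  shows "pol_value A r p \<alpha> \<pi> x \<le> v x + c / (1 - \<alpha>)"
proof -
  define C where "C = (\<Sum>y\<in>UNIV. \<bar>v y\<bar>)"
  have C: "0 \<le> v y + C" "v y \<le> 0 + C" for y
  proof -
    have "\<bar>v y\<bar> \<le> C"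
      unfolding C_def by (rule member_le_sum) auto
    then show "0 \<le> v y + C" "v y \<le> 0 + C"
      by auto
  qed
  have "partial_value \<pi> [] x n \<le> v x + c * (\<Sum>k<n. \<alpha> ^ k) + \<alpha> ^ n * C" for n
  proof -
    have "(T ^^ n) (\<lambda>_. 0) x \<le> (T ^^ n) v x + \<alpha> ^ n * C"
      using C(1) by (intro shift_monotoneD[OF shift_monotone_funpow[OF shift_monotone_Topt]])
    then show ?thesis
      using partial_value_le_Topt_funpow[OF \<pi>, of "[]" x n]
        funpow_le_geometric[OF shift_monotone_Topt step, of n x] by linarith
  qed
  then show ?thesis
    by (intro LIMSEQ_le[OF partial_value_tendsto[OF \<pi>] geometric_tail_tendsto]) auto
qed

lemma opt_value_le_if_Topt_le:
  assumes "\<And>y. T v y \<le> v y + c"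
  shows "opt_value A r p \<alpha> x \<le> v x + c / (1 - \<alpha>)"
proof -
  have "valid_policy A (det_policy (\<lambda>x. SOME a. a \<in> A x))"
    using A_ne by (intro valid_det_policy) (simp add: some_in_eq)
  then show ?thesis
    unfolding opt_value_def using pol_value_le_if_Topt_le[OF _ assms]
    by (intro cSUP_least) auto
qed

lemma pol_value_det_policy_ge_if_Tpol_ge:
  assumes \<phi>: "\<And>x. \<phi> x \<in> A x" and step: "\<And>y. v y + c \<le> Tpol r p \<alpha> \<phi> v y"
  shows "v x + c / (1 - \<alpha>) \<le> pol_value A r p \<alpha> (det_policy \<phi>) x"
proof -
  define C where "C = (\<Sum>y\<in>UNIV. \<bar>v y\<bar>)"
  have C: "0 \<le> v y + C" "v y \<le> 0 + C" for y
  proof -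
    have "\<bar>v y\<bar> \<le> C"
      unfolding C_def by (rule member_le_sum) auto
    then show "0 \<le> v y + C" "v y \<le> 0 + C"
      by auto
  qed
  have "v x + c * (\<Sum>k<n. \<alpha> ^ k) + \<alpha> ^ n * - C \<le> partial_value (det_policy \<phi>) [] x n" for n
  proof -
    have "(Tpol r p \<alpha> \<phi> ^^ n) v x \<le> (Tpol r p \<alpha> \<phi> ^^ n) (\<lambda>_. 0) x + \<alpha> ^ n * C"
      using C(2) by (intro shift_monotoneD[OF shift_monotone_funpow[OF shift_monotone_Tpol[OF \<phi>]]])
    then show ?thesis
      using partial_value_det_policy[OF \<phi>, of "[]" x n]
        funpow_ge_geometric[OF shift_monotone_Tpol[OF \<phi>] step, of x n] by simp
  qed
  then show ?thesis
    by (intro LIMSEQ_le[OF geometric_tail_tendsto[of "v x" c "- C"]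
          partial_value_tendsto[OF valid_det_policy[OF \<phi>]]]) auto
qed

lemma greedy_policy_eps_optimal:
  assumes \<phi>: "\<And>x. \<phi> x \<in> A x" and greedy: "T u = v" "Tpol r p \<alpha> \<phi> u = v"
    and small: "sp (\<lambda>x. u x - v x) \<le> (1 - \<alpha>) / \<alpha> * \<epsilon>"
  shows "eps_optimal A r p \<alpha> \<epsilon> (det_policy \<phi>)"
  unfolding eps_optimal_def
proof
  fix x
  define m where "m = (MIN y. u y - v y)"
  define M where "M = (MAX y. u y - v y)"
  have "v y \<le> u y + - m" for y
    using Min_range_le[of "\<lambda>y. u y - v y" y] unfolding m_def by linarith
  then have "T v y \<le> v y + \<alpha> * - m" for y
    using shift_monotoneD[OF shift_monotone_Topt] greedy(1) by metis
  then have opt: "opt_value A r p \<alpha> x \<le> v x - \<alpha> * m / (1 - \<alpha>)"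
    using opt_value_le_if_Topt_le by fastforce
  have "u y \<le> v y + M" for y
    using le_Max_range[of "\<lambda>y. u y - v y" y] unfolding M_def by linarith
  then have "Tpol r p \<alpha> \<phi> u y \<le> Tpol r p \<alpha> \<phi> v y + \<alpha> * M" for y
    by (rule shift_monotoneD[OF shift_monotone_Tpol[OF \<phi>]])
  then have "v y + \<alpha> * - M \<le> Tpol r p \<alpha> \<phi> v y" for y
    using greedy(2) by (simp add: algebra_simps)
  then have pol: "v x - \<alpha> * M / (1 - \<alpha>) \<le> pol_value A r p \<alpha> (det_policy \<phi>) x"
    using pol_value_det_policy_ge_if_Tpol_ge[OF \<phi>] by fastforce
  have "\<alpha> * (M - m) \<le> (1 - \<alpha>) * \<epsilon>"
    using mult_left_mono[OF small, of \<alpha>] alpha_pos unfolding sp_def M_def m_def by simp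
  then have "\<alpha> * M / (1 - \<alpha>) - \<alpha> * m / (1 - \<alpha>) \<le> \<epsilon>"
    using alpha_less_1 by (simp add: diff_divide_distrib[symmetric] right_diff_distrib divide_le_eq mult.commute)
  then show "opt_value A r p \<alpha> x - \<epsilon> \<le> pol_value A r p \<alpha> (det_policy \<phi>) x"
    using opt pol by linarith
qed

section \<open>Span contraction of the Bellman operator\<close>

lemma finite_coeff_set:
  "finite {1 - (\<Sum>z\<in>UNIV. min (p x a z) (p y b z)) |x y a b. a \<in> A x \<and> b \<in> A y}"
proof -
  let ?f = "\<lambda>((x, a), (y, b)). 1 - (\<Sum>z\<in>UNIV. min (p x a z) (p y b z))"
  have "{1 - (\<Sum>z\<in>UNIV. min (p x a z) (p y b z)) |x y a b. a \<in> A x \<and> b \<in> A y}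
      \<subseteq> ?f ` (Sigma UNIV A \<times> Sigma UNIV A)"
    by force
  moreover have "finite (Sigma UNIV A \<times> Sigma UNIV A)"
    using A_fin by auto
  ultimately show ?thesis
    by (meson finite_subset finite_imageI)
qed

lemma le_coeff:
  "a \<in> A x \<Longrightarrow> b \<in> A y \<Longrightarrow> 1 - (\<Sum>z\<in>UNIV. min (p x a z) (p y b z)) \<le> coeff A p"
  unfolding coeff_def using finite_coeff_set by (intro Max_ge) auto

lemma coeff_le_1: "coeff A p \<le> 1"
proof -
  let ?S = "{1 - (\<Sum>z\<in>UNIV. min (p x a z) (p y b z)) |x y a b. a \<in> A x \<and> b \<in> A y}"
  have "0 \<le> (\<Sum>z\<in>UNIV. min (p x a z) (p y b z))" if "a \<in> A x" "b \<in> A y" for x y a b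
    using that p_nonneg by (intro sum_nonneg) simp
  then have "\<forall>c\<in>?S. c \<le> 1"
    by auto
  moreover obtain x a where "a \<in> A x"
    using A_ne by blast
  then have "?S \<noteq> {}"
    by blast
  ultimately show ?thesis
    unfolding coeff_def using finite_coeff_set by (subst Max_le_iff) auto
qed

lemma coeff_nonneg: "0 \<le> coeff A p"
proof -
  obtain x a where "a \<in> A x"
    using A_ne by blast
  then show ?thesis
    using le_coeff[of a x a x] p_sum by simp
qed

lemma sp_Topt_diff_le: "sp (\<lambda>x. T u x - T w x) \<le> \<alpha> * coeff A p * sp (\<lambda>x. u x - w x)"
proof (rule sp_leI)
  fix x y
  let ?d = "\<lambda>z. u z - w z"
  obtain a where a: "a \<in> A x" "T u x = Tact r p \<alpha> a u x" by (rule Topt_attained)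
  obtain b where b: "b \<in> A y" "T w y = Tact r p \<alpha> b w y" by (rule Topt_attained)
  have "(T u x - T w x) - (T u y - T w y)
      \<le> (Tact r p \<alpha> a u x - Tact r p \<alpha> a w x) - (Tact r p \<alpha> b u y - Tact r p \<alpha> b w y)"
    using a b Tact_le_Topt[OF a(1), of w] Tact_le_Topt[OF b(1), of u] by linarith
  also have "\<dots> = \<alpha> * (\<Sum>z\<in>UNIV. (p x a z - p y b z) * ?d z)"
  proof -
    have "(\<Sum>z\<in>UNIV. (p x a z - p y b z) * ?d z)
        = ((\<Sum>z\<in>UNIV. p x a z * u z) - (\<Sum>z\<in>UNIV. p x a z * w z))
          - ((\<Sum>z\<in>UNIV. p y b z * u z) - (\<Sum>z\<in>UNIV. p y b z * w z))"
      by (simp add: sum_subtractf[symmetric] algebra_simps)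
    then show ?thesis
      unfolding Tact_def by (simp add: right_diff_distrib)
  qed
  also have "\<dots> \<le> \<alpha> * ((1 - (\<Sum>z\<in>UNIV. min (p x a z) (p y b z))) * ((MAX z. ?d z) - (MIN z. ?d z)))"
    using alpha_pos p_nonneg a(1) b(1) p_sum
    by (intro mult_left_mono sum_prob_diff_mult_le le_Max_range Min_range_le) auto
  also have "\<dots> \<le> \<alpha> * (coeff A p * sp ?d)"
    unfolding sp_def[symmetric] using alpha_pos sp_nonneg le_coeff[OF a(1) b(1)]
    by (intro mult_left_mono mult_right_mono) auto
  finally show "(T u x - T w x) - (T u y - T w y) \<le> \<alpha> * coeff A p * sp ?d"
    by simp
qed

lemma sp_VI_step_le:
  "sp (\<lambda>x. VI_iter A r p \<alpha> v0 n x - VI_iter A r p \<alpha> v0 (Suc n) x)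
     \<le> (\<alpha> * coeff A p) ^ n * sp (\<lambda>x. v0 x - T v0 x)"
proof (induction n)
  case 0
  show ?case by (simp add: VI_iter_def)
next
  case (Suc n)
  have "sp (\<lambda>x. VI_iter A r p \<alpha> v0 (Suc n) x - VI_iter A r p \<alpha> v0 (Suc (Suc n)) x)
      \<le> \<alpha> * coeff A p * sp (\<lambda>x. VI_iter A r p \<alpha> v0 n x - VI_iter A r p \<alpha> v0 (Suc n) x)"
    unfolding VI_iter_def funpow.simps comp_def by (rule sp_Topt_diff_le)
  also have "\<dots> \<le> \<alpha> * coeff A p * ((\<alpha> * coeff A p) ^ n * sp (\<lambda>x. v0 x - T v0 x))"
    using Suc.IH alpha_pos coeff_nonneg by (intro mult_left_mono) auto
  finally show ?case
    by (simp add: mult_ac)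
qed

lemma sp_first_step_le:
  assumes v1: "\<And>x. v1 x = Max (r x ` A x)"
  shows "sp (\<lambda>x. v0 x - T v0 x) \<le> sp v1 + (1 + \<alpha>) * sp v0"
proof (rule sp_leI)
  fix x y
  have upper: "T v0 y \<le> v1 y + \<alpha> * (MAX z. v0 z)"
  proof -
    obtain b where b: "b \<in> A y" "T v0 y = Tact r p \<alpha> b v0 y" by (rule Topt_attained)
    have "r y b \<le> v1 y"
      unfolding v1 using A_fin b by (intro Max_ge) auto
    moreover have "\<alpha> * (\<Sum>z\<in>UNIV. p y b z * v0 z) \<le> \<alpha> * (MAX z. v0 z)"
      using alpha_pos expectation_le_Max[OF b(1)] by (intro mult_left_mono) auto
    ultimately show ?thesis
      using b unfolding Tact_def by linarith
  qed
  have lower: "v1 x + \<alpha> * (MIN z. v0 z) \<le> T v0 x"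
  proof -
    obtain a where a: "a \<in> A x" "v1 x = r x a"
      using Max_in[of "r x ` A x"] A_fin A_ne unfolding v1 by fastforce
    have "\<alpha> * (MIN z. v0 z) \<le> \<alpha> * (\<Sum>z\<in>UNIV. p x a z * v0 z)"
      using alpha_pos Min_le_expectation[OF a(1)] by (intro mult_left_mono) auto
    then have "v1 x + \<alpha> * (MIN z. v0 z) \<le> Tact r p \<alpha> a v0 x"
      using a unfolding Tact_def by linarith
    then show ?thesis
      using Tact_le_Topt[OF a(1), of v0] by linarith
  qed
  show "(v0 x - T v0 x) - (v0 y - T v0 y) \<le> sp v1 + (1 + \<alpha>) * sp v0"
    using upper lower diff_le_sp[of v1 y x] diff_le_sp[of v0 x y]
    unfolding sp_def[of v0] by (simp add: algebra_simps)
qed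

lemma VI_stop_greedy_eps_optimal:
  assumes stop: "VI_stop A r p \<alpha> \<epsilon> v0 n" and \<phi>: "\<And>x. \<phi> x \<in> A x"
    and greedy: "Tpol r p \<alpha> \<phi> (VI_iter A r p \<alpha> v0 (n - 1)) = VI_iter A r p \<alpha> v0 n"
  shows "eps_optimal A r p \<alpha> \<epsilon> (det_policy \<phi>)"
proof -
  have "T (VI_iter A r p \<alpha> v0 (n - 1)) = VI_iter A r p \<alpha> v0 n"
    using stop unfolding VI_stop_def VI_iter_def by (cases n) auto
  moreover have "sp (\<lambda>x. VI_iter A r p \<alpha> v0 (n - 1) x - VI_iter A r p \<alpha> v0 n x) \<le> (1 - \<alpha>) / \<alpha> * \<epsilon>"
    using stop unfolding VI_stop_def by blast
  ultimately show ?thesis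
    by (rule greedy_policy_eps_optimal[OF \<phi> _ greedy])
qed

end

section \<open>The iteration bound\<close>

(* (\<alpha>\<gamma>)^(n-1) (sp v1 + (1 + \<alpha>) sp v0) <= (1 - \<alpha>) \<epsilon> / \<alpha>
   iff (\<alpha>\<gamma>)^n <= VI_threshold \<epsilon> \<gamma> (sp v1) (sp v0) \<alpha>,
   and VI_bound is the least such n >= 1 up to rounding. *)
definition VI_threshold :: "real \<Rightarrow> real \<Rightarrow> real \<Rightarrow> real \<Rightarrow> real \<Rightarrow> real" where
  "VI_threshold e g s1 s0 a = (1 - a) * e * g / (s1 + (1 + a) * s0)"

lemma VI_bound_eq:
  "VI_bound e g s1 s0 a = max (of_int \<lceil>ln (VI_threshold e g s1 s0 a) / ln (a * g)\<rceil>) 1"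
  unfolding VI_bound_def VI_threshold_def ..

lemma ln_ratio_le_VI_bound: "ln (VI_threshold e g s1 s0 a) / ln (a * g) \<le> VI_bound e g s1 s0 a"
  unfolding VI_bound_eq by (meson le_of_int_ceiling max.coboundedI1)

lemma VI_bound_eq_1:
  "ln (VI_threshold e g s1 s0 a) / ln (a * g) \<le> 1 \<Longrightarrow> VI_bound e g s1 s0 a = 1"
  unfolding VI_bound_eq by (simp add: ceiling_le_iff)

lemma one_le_VI_bound: "1 \<le> VI_bound e g s1 s0 a"
  unfolding VI_bound_def by simp

context
  fixes e g s1 s0 :: real
  assumes e: "0 < e" and g: "0 < g" "g \<le> 1" and s0: "0 \<le> s0" and s: "0 < s1 + s0"
begin

lemma VI_denominator_ge: "0 \<le> a \<Longrightarrow> s1 + s0 \<le> s1 + (1 + a) * s0"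
  using mult_nonneg_nonneg[of a s0] s0 by (simp add: distrib_right)

lemma VI_threshold_pos: "0 \<le> a \<Longrightarrow> a < 1 \<Longrightarrow> 0 < VI_threshold e g s1 s0 a"
  unfolding VI_threshold_def using e g s VI_denominator_ge[of a] by simp

lemma VI_threshold_antimono:
  assumes "0 \<le> a" "a \<le> b" "b < 1"
  shows "VI_threshold e g s1 s0 b \<le> VI_threshold e g s1 s0 a"
  unfolding VI_threshold_def
proof (rule frac_le)
  show "0 \<le> (1 - a) * e * g" "(1 - b) * e * g \<le> (1 - a) * e * g"
    using assms e g by auto
  show "0 < s1 + (1 + a) * s0"
    using s VI_denominator_ge[OF assms(1)] by linarith
  show "s1 + (1 + a) * s0 \<le> s1 + (1 + b) * s0"
    using assms s0 by (simp add: mult_right_mono)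
qed

lemma VI_threshold_le: "0 \<le> a \<Longrightarrow> a < 1 \<Longrightarrow> VI_threshold e g s1 s0 a \<le> (1 - a) * e / (s1 + s0)"
  unfolding VI_threshold_def using e g s VI_denominator_ge[of a]
  by (intro frac_le) (auto intro: mult_left_le)

lemma tendsto_VI_bound_at_right_0: "(VI_bound e g s1 s0 \<longlongrightarrow> 1) (at_right 0)"
proof -
  define c where "c = VI_threshold e g s1 s0 (1 / 2)"
  have "0 < c"
    unfolding c_def by (rule VI_threshold_pos) auto
  then have "eventually (\<lambda>a. a \<in> {0<..<min (1 / 2) c}) (at_right 0)"
    by (intro eventually_at_right_real) simp
  then have "eventually (\<lambda>a. VI_bound e g s1 s0 a = 1) (at_right 0)"
  proof (rule eventually_mono)
    fix a :: real
    assume "a \<in> {0<..<min (1 / 2) c}"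
    then have a: "0 < a" "a < 1 / 2" "a < c"
      by auto
    have "a * g \<le> a"
      using a g by (intro mult_left_le) auto
    also have "\<dots> \<le> c"
      using a by simp
    also have "c \<le> VI_threshold e g s1 s0 a"
      unfolding c_def using a by (intro VI_threshold_antimono) auto
    finally have "ln (a * g) \<le> ln (VI_threshold e g s1 s0 a)"
      using a g VI_threshold_pos[of a] by simp
    moreover have "a * g < 1"
      using \<open>a * g \<le> a\<close> a by linarith
    ultimately show "VI_bound e g s1 s0 a = 1"
      using a g by (intro VI_bound_eq_1) simp
  qed
  then show ?thesis
    by (rule tendsto_eventually)
qed

lemma filterlim_VI_bound_at_left_1: "filterlim (VI_bound e g s1 s0) at_top (at_left 1)"
proof -
  define L where "L = - ln (g / 2)"
  have L: "0 < L"
    unfolding L_def using g by simp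
  have "((\<lambda>a. (1 - a) * e / (s1 + s0)) \<longlongrightarrow> 0) (at_left 1)"
    using s by (intro tendsto_eq_intros) auto
  moreover have "eventually (\<lambda>a. 0 < (1 - a) * e / (s1 + s0)) (at_left 1)"
    using eventually_at_left_real[of 0 1] e s by (auto elim: eventually_mono)
  ultimately have "filterlim (\<lambda>a. (1 - a) * e / (s1 + s0)) (at_right 0) (at_left 1)"
    by (rule tendsto_imp_filterlim_at_right)
  then have "filterlim (\<lambda>a. - ln ((1 - a) * e / (s1 + s0))) at_top (at_left 1)"
    unfolding filterlim_uminus_at_bot[symmetric] by (rule filterlim_compose[OF ln_at_0])
  then have lim: "filterlim (\<lambda>a. inverse L * - ln ((1 - a) * e / (s1 + s0))) at_top (at_left 1)"
    using L by (intro filterlim_tendsto_pos_mult_at_top[OF tendsto_const]) auto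
  have "eventually (\<lambda>a. a \<in> {max (1 / 2) (1 - (s1 + s0) / e)<..<1}) (at_left 1)"
    using e s by (intro eventually_at_left_real) auto
  then have "eventually (\<lambda>a. inverse L * - ln ((1 - a) * e / (s1 + s0)) \<le> VI_bound e g s1 s0 a)
      (at_left 1)"
  proof (rule eventually_mono)
    fix a :: real
    assume a: "a \<in> {max (1 / 2) (1 - (s1 + s0) / e)<..<1}"
    let ?th = "VI_threshold e g s1 s0 a"
    have "(1 - a) * e < s1 + s0"
      using a e by (simp add: field_simps)
    then have th_lt_1: "(1 - a) * e / (s1 + s0) < 1"
      using s by simp
    have th: "0 < ?th" "?th \<le> (1 - a) * e / (s1 + s0)"
      using a by (intro VI_threshold_pos VI_threshold_le; simp)+
    have "g / 2 < a * g" "a * g < 1"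
      using a g by (auto intro: mult_strict_right_mono mult_less_le_imp_less[of a 1 g 1, simplified])
    then have ag: "0 < - ln (a * g)" "- ln (a * g) \<le> L"
      unfolding L_def using g by auto
    have "inverse L * - ln ((1 - a) * e / (s1 + s0)) = - ln ((1 - a) * e / (s1 + s0)) / L"
      by (simp add: divide_inverse mult.commute)
    also have "\<dots> \<le> - ln ?th / - ln (a * g)"
      using th th_lt_1 ag by (intro frac_le) auto
    also have "\<dots> \<le> VI_bound e g s1 s0 a"
      using ln_ratio_le_VI_bound by simp
    finally show "inverse L * - ln ((1 - a) * e / (s1 + s0)) \<le> VI_bound e g s1 s0 a" .
  qed
  then show ?thesis
    by (rule filterlim_at_top_mono[OF lim])
qed

lemma mono_on_VI_bound: "mono_on {0<..<1} (VI_bound e g s1 s0)"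
proof (rule mono_onI)
  fix a b :: real
  assume ab: "a \<in> {0<..<1}" "b \<in> {0<..<1}" "a \<le> b"
  let ?tha = "VI_threshold e g s1 s0 a" and ?thb = "VI_threshold e g s1 s0 b"
  have th: "ln ?thb \<le> ln ?tha"
    using ab VI_threshold_antimono[of a b] VI_threshold_pos[of b] by simp
  have "a * g \<le> b * g" "b * g < 1"
    using ab g by (auto intro: mult_right_mono mult_less_le_imp_less[of b 1 g 1, simplified])
  then have ag: "ln (a * g) \<le> ln (b * g)" "ln (b * g) < 0"
    using ab g by simp_all
  show "VI_bound e g s1 s0 a \<le> VI_bound e g s1 s0 b"
  proof (cases "ln ?tha < 0")
    case True
    have "ln ?tha / ln (a * g) = - ln ?tha / - ln (a * g)"
      by simp
    also have "\<dots> \<le> - ln ?thb / - ln (b * g)"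
      using True th ag by (intro frac_le) auto
    also have "\<dots> = ln ?thb / ln (b * g)"
      by simp
    finally show ?thesis
      unfolding VI_bound_eq by (intro max.mono) (auto intro: ceiling_mono)
  next
    case False
    then have "ln ?tha / ln (a * g) \<le> 1"
      using ag divide_nonneg_neg[of "ln ?tha" "ln (a * g)"] by linarith
    then show ?thesis
      using VI_bound_eq_1 one_le_VI_bound by simp
  qed
qed

end

lemma power_le_if_ln_ratio_le:
  fixes q c :: real
  assumes q: "0 < q" "q < 1" and c: "0 < c" and n: "ln c / ln q \<le> real n"
  shows "q ^ n \<le> c"
proof -
  have "ln (q ^ n) = real n * ln q"
    by (rule ln_realpow)
  also have "\<dots> \<le> ln c / ln q * ln q"
    using q n by (intro mult_right_mono_neg) auto
  also have "\<dots> = ln c"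
    using q by simp
  finally show ?thesis
    using q c by simp
qed

context discounted_mdp
begin

lemma VI_stops_within_bound:
  assumes eps: "0 < \<epsilon>" and v1: "\<And>x. v1 x = Max (r x ` A x)"
    and coeff_pos: "0 < coeff A p" and sp_pos: "0 < sp v1 + sp v0"
  shows "\<exists>n. VI_stop A r p \<alpha> \<epsilon> v0 n \<and> real n \<le> VI_bound \<epsilon> (coeff A p) (sp v1) (sp v0) \<alpha>"
proof -
  define q where "q = \<alpha> * coeff A p"
  define K where "K = sp v1 + (1 + \<alpha>) * sp v0"
  define c where "c = VI_threshold \<epsilon> (coeff A p) (sp v1) (sp v0) \<alpha>"
  define n where "n = nat (max \<lceil>ln c / ln q\<rceil> 1)"
  have q: "0 < q" "q < 1"
    using alpha_pos coeff_pos mult_less_le_imp_less[OF alpha_less_1 coeff_le_1] unfolding q_def by auto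
  have K: "0 < K"
    using sp_pos VI_denominator_ge[OF eps coeff_pos coeff_le_1 sp_nonneg sp_pos, of \<alpha>] alpha_pos
    unfolding K_def by linarith
  have c: "0 < c"
    unfolding c_def using alpha_pos alpha_less_1
    by (intro VI_threshold_pos[OF eps coeff_pos coeff_le_1 sp_nonneg sp_pos]) auto
  have cK: "c * K = (1 - \<alpha>) * \<epsilon> * coeff A p"
    using K unfolding c_def VI_threshold_def K_def by simp
  have n_eq: "real n = max (of_int \<lceil>ln c / ln q\<rceil>) 1"
    unfolding n_def by simp
  then have bound: "real n = VI_bound \<epsilon> (coeff A p) (sp v1) (sp v0) \<alpha>"
    unfolding VI_bound_eq c_def q_def by simp
  have "ln c / ln q \<le> real n"
    unfolding n_eq by (meson le_of_int_ceiling max.coboundedI1)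
  then have "q ^ n \<le> c"
    by (rule power_le_if_ln_ratio_le[OF q c])
  obtain k where k: "n = Suc k"
    using n_eq by (cases n) auto
  have "sp (\<lambda>x. VI_iter A r p \<alpha> v0 k x - VI_iter A r p \<alpha> v0 (Suc k) x)
      \<le> q ^ k * sp (\<lambda>x. v0 x - T v0 x)"
    unfolding q_def by (rule sp_VI_step_le)
  also have "\<dots> \<le> q ^ k * K"
    unfolding K_def using q by (intro mult_left_mono sp_first_step_le[OF v1]) auto
  also have "q ^ k * K \<le> (1 - \<alpha>) / \<alpha> * \<epsilon>"
  proof -
    have "q ^ k * K * q \<le> c * K"
      using \<open>q ^ n \<le> c\<close> K k by (simp add: mult_right_mono mult_ac)
    also have "\<dots> = (1 - \<alpha>) * \<epsilon> * coeff A p"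
      by (rule cK)
    also have "\<dots> = (1 - \<alpha>) / \<alpha> * \<epsilon> * q"
      using alpha_pos unfolding q_def by simp
    finally show ?thesis
      using q by (simp only: mult_le_cancel_right_pos)
  qed
  finally show ?thesis
    using bound k unfolding VI_stop_def by auto
qed

end

theorem theorem2:
  fixes A :: "'s::finite \<Rightarrow> 'a set" and r :: "'s \<Rightarrow> 'a \<Rightarrow> real"
    and p :: "'s \<Rightarrow> 'a \<Rightarrow> 's \<Rightarrow> real" and v0 v1 :: "'s \<Rightarrow> real"
    and \<alpha> \<epsilon> \<gamma> :: real
  assumes A_fin: "\<And>x. finite (A x)" and A_ne: "\<And>x. A x \<noteq> {}"
    and p_nonneg: "\<And>x a y. a \<in> A x \<Longrightarrow> 0 \<le> p x a y"
    and p_sum: "\<And>x a. a \<in> A x \<Longrightarrow> (\<Sum>y\<in>UNIV. p x a y) = 1"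
    and alpha: "0 < \<alpha>" "\<alpha> < 1" and eps: "0 < \<epsilon>"
    and v1_def: "\<And>x. v1 x = Max ((\<lambda>a. r x a) ` A x)"
    and gamma_def: "\<gamma> = coeff A p"
    and gamma: "0 < \<gamma>" "\<gamma> \<le> 1"
    and sp_pos: "sp v1 + sp v0 > 0"
  shows "(\<exists>N. VI_stop A r p \<alpha> \<epsilon> v0 N \<and> (\<forall>n<N. \<not> VI_stop A r p \<alpha> \<epsilon> v0 n)
            \<and> real N \<le> VI_bound \<epsilon> \<gamma> (sp v1) (sp v0) \<alpha>
            \<and> (\<forall>\<phi>. (\<forall>x. \<phi> x \<in> A x) \<and>
                   Tpol r p \<alpha> \<phi> (VI_iter A r p \<alpha> v0 (N - 1)) = VI_iter A r p \<alpha> v0 N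
                   \<longrightarrow> eps_optimal A r p \<alpha> \<epsilon> (det_policy \<phi>)))
     \<and> (\<forall>(e::real) (g::real) (w0::'s \<Rightarrow> real) (w1::'s \<Rightarrow> real).
          0 < e \<and> 0 < g \<and> g \<le> 1 \<and> sp w1 + sp w0 > 0 \<longrightarrow>
            ((VI_bound e g (sp w1) (sp w0) \<longlongrightarrow> 1) (at_right 0))
            \<and> filterlim (VI_bound e g (sp w1) (sp w0)) at_top (at_left 1)
            \<and> mono_on {0<..<1} (VI_bound e g (sp w1) (sp w0)))"
proof -
  interpret discounted_mdp A r p \<alpha>
    using A_fin A_ne p_nonneg p_sum alpha by unfold_locales auto
  obtain n where n: "VI_stop A r p \<alpha> \<epsilon> v0 n" "real n \<le> VI_bound \<epsilon> \<gamma> (sp v1) (sp v0) \<alpha>"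
    using VI_stops_within_bound[OF eps v1_def _ sp_pos] gamma gamma_def by auto
  define N where "N = (LEAST n. VI_stop A r p \<alpha> \<epsilon> v0 n)"
  have N: "VI_stop A r p \<alpha> \<epsilon> v0 N" "\<forall>m<N. \<not> VI_stop A r p \<alpha> \<epsilon> v0 m" "N \<le> n"
    unfolding N_def using n(1) by (auto intro: LeastI Least_le dest: not_less_Least)
  then have "real N \<le> VI_bound \<epsilon> \<gamma> (sp v1) (sp v0) \<alpha>"
    using n(2) by linarith
  moreover have "\<forall>\<phi>. (\<forall>x. \<phi> x \<in> A x) \<and>
      Tpol r p \<alpha> \<phi> (VI_iter A r p \<alpha> v0 (N - 1)) = VI_iter A r p \<alpha> v0 N
      \<longrightarrow> eps_optimal A r p \<alpha> \<epsilon> (det_policy \<phi>)"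
    using VI_stop_greedy_eps_optimal[OF N(1)] by simp
  moreover have "((VI_bound e g (sp w1) (sp w0) \<longlongrightarrow> 1) (at_right 0))
      \<and> filterlim (VI_bound e g (sp w1) (sp w0)) at_top (at_left 1)
      \<and> mono_on {0<..<1} (VI_bound e g (sp w1) (sp w0))"
    if "0 < e \<and> 0 < g \<and> g \<le> 1 \<and> sp w1 + sp w0 > 0" for e g :: real and w0 w1 :: "'s \<Rightarrow> real"
    using that sp_nonneg
    by (intro conjI tendsto_VI_bound_at_right_0 filterlim_VI_bound_at_left_1 mono_on_VI_bound) auto
  ultimately show ?thesis
    using N(1,2) by (intro conjI exI[of _ N] allI impI) auto
qed

end
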